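(* Let $X$ be a finite quandle with connected components $C_1,\dots,C_k$, let $s=(x_1,\dots,x_n)\in X^n$, and let $n_j=|\{1\le i\le n:x_i\in C_j\}|$. Suppose $n_j>|C_j|$ for some $1\le j\le k$. Then the image in $S_n$ of the stabilizer of $s$ in $B_n$ is not contained in $A_n$.
   Context: A quandle is a set $X$ with an operation $x^y$ such that $x\mapsto x^y$ is bijective for each $y$, $(z^x)^y=(z^y)^{x^y}$ and $x^x=x$; its connected components are the classes of the smallest equivalence relation with $x\sim x^y$. $B_n$ acts on $X^n$ from the right by $(\dots,x_i,x_{i+1},\dots)^{\sigma_i}=(\dots,x_{i+1},x_i^{x_{i+1}},\dots)$, and $B_n\to S_n$ sends $\sigma_i\mapsto(i\ i+1)$. *)

theory Defs
  imports "HOL-Combinatorics.Combinatorics"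
begin

text \<open>A quandle on carrier X with operation qop x y = x^y.\<close>
definition quandle :: "'a set \<Rightarrow> ('a \<Rightarrow> 'a \<Rightarrow> 'a) \<Rightarrow> bool" where
  "quandle X qop \<longleftrightarrow>
     (\<forall>y\<in>X. bij_betw (\<lambda>x. qop x y) X X) \<and>
     (\<forall>x\<in>X. \<forall>y\<in>X. \<forall>z\<in>X. qop (qop z x) y = qop (qop z y) (qop x y)) \<and>
     (\<forall>x\<in>X. qop x x = x)"

definition qstep :: "'a set \<Rightarrow> ('a \<Rightarrow> 'a \<Rightarrow> 'a) \<Rightarrow> ('a \<times> 'a) set" where
  "qstep X qop = {(x, qop x y) | x y. x \<in> X \<and> y \<in> X}"

definition qconn :: "'a set \<Rightarrow> ('a \<Rightarrow> 'a \<Rightarrow> 'a) \<Rightarrow> ('a \<times> 'a) set" where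
  "qconn X qop = Id_on X \<union> (qstep X qop \<union> (qstep X qop)\<inverse>)\<^sup>+"

definition components :: "'a set \<Rightarrow> ('a \<Rightarrow> 'a \<Rightarrow> 'a) \<Rightarrow> 'a set set" where
  "components X qop = X // qconn X qop"

text \<open>Braid group generators: BGen i True = sigma_i, BGen i False = sigma_i^-1
  (positions are 0-based: sigma_i acts on positions i and i+1).
  Elements of B_n are represented by words in these generators.\<close>
datatype bgen = BGen nat bool

definition valid_word :: "nat \<Rightarrow> bgen list \<Rightarrow> bool" where
  "valid_word n w \<longleftrightarrow> (\<forall>g\<in>set w. case g of BGen i _ \<Rightarrow> Suc i < n)"

fun gen_act :: "'a set \<Rightarrow> ('a \<Rightarrow> 'a \<Rightarrow> 'a) \<Rightarrow> 'a list \<Rightarrow> bgen \<Rightarrow> 'a list" where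
  "gen_act X qop s (BGen i True) =
     s[i := s ! Suc i, Suc i := qop (s ! i) (s ! Suc i)]"
| "gen_act X qop s (BGen i False) =
     s[i := inv_into X (\<lambda>z. qop z (s ! i)) (s ! Suc i), Suc i := s ! i]"

fun word_act :: "'a set \<Rightarrow> ('a \<Rightarrow> 'a \<Rightarrow> 'a) \<Rightarrow> 'a list \<Rightarrow> bgen list \<Rightarrow> 'a list" where
  "word_act X qop s [] = s"
| "word_act X qop s (g # w) = word_act X qop (gen_act X qop s g) w"

fun word_perm :: "bgen list \<Rightarrow> nat \<Rightarrow> nat" where
  "word_perm [] = id"
| "word_perm (BGen i _ # w) = transpose i (Suc i) \<circ> word_perm w"

definition stab_image :: "'a set \<Rightarrow> ('a \<Rightarrow> 'a \<Rightarrow> 'a) \<Rightarrow> nat \<Rightarrow> 'a list \<Rightarrow> (nat \<Rightarrow> nat) set" where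
  "stab_image X qop n s =
     {word_perm w | w. valid_word n w \<and> word_act X qop s w = s}"

definition alternating :: "nat \<Rightarrow> (nat \<Rightarrow> nat) set" where
  "alternating n = {p. p permutes {..<n} \<and> evenperm p}"

end

theory Submission
  imports Defs
begin

text \<open>Since the component \<open>C\<close> is finite, the pigeonhole principle gives positions \<open>i < j\<close>
  with \<open>x\<^sub>i = x\<^sub>j\<close>. A braid \<open>L\<close> made of \<open>\<sigma>\<close>-generators that only touches positions
  \<open>i+1, \<dots>, j\<close> brings \<open>x\<^sub>j\<close> next to \<open>x\<^sub>i\<close>. Because \<open>x\<^sup>x = x\<close>, the generator \<open>\<sigma>\<^sub>i\<close> fixes a
  tuple with two equal neighbouring entries, so \<open>L \<sigma>\<^sub>i L\<^sup>-\<^sup>1\<close> stabilises \<open>s\<close>. It is a word of odd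
  length, hence maps to an odd permutation.\<close>

lemma quandle_closed:
  assumes "quandle X qop" "x \<in> X" "y \<in> X"
  shows "qop x y \<in> X"
  using assms unfolding quandle_def bij_betw_def by blast

lemma components_subset:
  assumes "quandle X qop" "C \<in> components X qop"
  shows "C \<subseteq> X"
proof -
  have "qstep X qop \<union> (qstep X qop)\<inverse> \<subseteq> X \<times> X"
    using quandle_closed[OF assms(1)] unfolding qstep_def by blast
  then have "qconn X qop \<subseteq> X \<times> X"
    unfolding qconn_def using trancl_subset_Sigma by blast
  then show ?thesis
    using assms(2) unfolding components_def quotient_def by blast
qed

lemma word_perm_Cons: "word_perm (BGen i b # w) = transpose i (Suc i) \<circ> word_perm w"
  by (simp only: word_perm.simps)

lemma permutation_word_perm: "permutation (word_perm w)"
proof (induction w)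
  case (Cons g w)
  then show ?case
    by (cases g) (simp only: word_perm_Cons permutation_compose permutation_swap_id)
qed simp

lemma evenperm_word_perm: "evenperm (word_perm w) \<longleftrightarrow> even (length w)"
proof (induction w)
  case (Cons g w)
  then show ?case
    by (cases g) (simp only: word_perm_Cons evenperm_comp permutation_swap_id
        permutation_word_perm evenperm_swap, simp)
qed (simp add: evenperm_id)

fun bgen_inv :: "bgen \<Rightarrow> bgen" where
  "bgen_inv (BGen i b) = BGen i (\<not> b)"

definition word_inv :: "bgen list \<Rightarrow> bgen list" where
  "word_inv w = rev (map bgen_inv w)"

lemma length_word_inv [simp]: "length (word_inv w) = length w"
  by (simp add: word_inv_def)

lemma valid_word_append: "valid_word n (w @ w') \<longleftrightarrow> valid_word n w \<and> valid_word n w'"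
  by (auto simp: valid_word_def)

lemma valid_word_inv: "valid_word n (word_inv w) \<longleftrightarrow> valid_word n w"
proof -
  have "(case bgen_inv g of BGen i _ \<Rightarrow> Suc i < n) \<longleftrightarrow> (case g of BGen i _ \<Rightarrow> Suc i < n)" for g
    by (cases g) simp
  then show ?thesis
    unfolding valid_word_def word_inv_def by simp
qed

lemma word_act_append:
  "word_act X qop t (w @ w') = word_act X qop (word_act X qop t w) w'"
  by (induction w arbitrary: t) auto

lemma length_gen_act [simp]: "length (gen_act X qop t g) = length t"
proof (cases g)
  case (BGen i b)
  then show ?thesis
    by (cases b) simp_all
qed

lemma length_word_act [simp]: "length (word_act X qop t w) = length t"
  by (induction w arbitrary: t) simp_all

lemma gen_act_closed:
  assumes "quandle X qop" "set t \<subseteq> X" "Suc i < length t"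
  shows "set (gen_act X qop t (BGen i b)) \<subseteq> X"
proof -
  have ti: "t ! i \<in> X" and tSi: "t ! Suc i \<in> X"
    using assms(2,3) by auto
  have "bij_betw (\<lambda>z. qop z (t ! i)) X X"
    using assms(1) ti unfolding quandle_def by blast
  then have "inv_into X (\<lambda>z. qop z (t ! i)) (t ! Suc i) \<in> X"
    using tSi by (metis bij_betw_def inv_into_into)
  moreover have "qop (t ! i) (t ! Suc i) \<in> X"
    using quandle_closed[OF assms(1) ti tSi] .
  ultimately show ?thesis
    using assms(2) ti tSi
    by (cases b) (auto dest!: set_update_subset_insert[THEN subsetD])
qed

lemma gen_act_bgen_inv:
  assumes "quandle X qop" "set t \<subseteq> X" "Suc i < length t"
  shows "gen_act X qop (gen_act X qop t (BGen i b)) (bgen_inv (BGen i b)) = t"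
proof -
  have ti: "t ! i \<in> X" and tSi: "t ! Suc i \<in> X"
    using assms(2,3) by auto
  have bij: "bij_betw (\<lambda>z. qop z y) X X" if "y \<in> X" for y
    using assms(1) that unfolding quandle_def by blast
  show ?thesis
  proof (cases b)
    case True
    have "inv_into X (\<lambda>z. qop z (t ! Suc i)) (qop (t ! i) (t ! Suc i)) = t ! i"
      using bij[OF tSi] ti by (metis bij_betw_def inv_into_f_f)
    with True assms(3) show ?thesis
      by (intro nth_equalityI) (auto simp: nth_list_update)
  next
    case False
    have "qop (inv_into X (\<lambda>z. qop z (t ! i)) (t ! Suc i)) (t ! i) = t ! Suc i"
      using bij[OF ti] tSi by (metis bij_betw_def f_inv_into_f)
    with False assms(3) show ?thesis
      by (intro nth_equalityI) (auto simp: nth_list_update)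
  qed
qed

lemma word_act_word_inv:
  assumes "quandle X qop" "set t \<subseteq> X" "valid_word (length t) w"
  shows "word_act X qop (word_act X qop t w) (word_inv w) = t"
  using assms(2,3)
proof (induction w arbitrary: t)
  case (Cons g w)
  obtain i b where g: "g = BGen i b" and i: "Suc i < length t"
    using Cons.prems(2) unfolding valid_word_def by (cases g) auto
  let ?t' = "gen_act X qop t g"
  have "set ?t' \<subseteq> X"
    using gen_act_closed[OF assms(1) Cons.prems(1) i] g by simp
  moreover have "valid_word (length ?t') w"
    using Cons.prems(2) by (simp add: valid_word_def)
  ultimately have "word_act X qop (word_act X qop ?t' w) (word_inv w) = ?t'"
    by (rule Cons.IH)
  then show ?case
    using gen_act_bgen_inv[OF assms(1) Cons.prems(1) i]
    by (simp add: word_inv_def word_act_append g)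
qed (simp add: word_inv_def)

definition pull_word :: "nat \<Rightarrow> nat \<Rightarrow> bgen list" where
  "pull_word p m = map (\<lambda>k. BGen (p + k) True) (rev [0..<m])"

lemma pull_word_Suc: "pull_word p (Suc m) = BGen (p + m) True # pull_word p m"
  by (simp add: pull_word_def)

lemma valid_pull_word: "p + m < n \<Longrightarrow> valid_word n (pull_word p m)"
  by (auto simp: valid_word_def pull_word_def)

lemma nth_word_act_pull_word:
  assumes "p + m < length t" "q \<le> p"
  shows "word_act X qop t (pull_word p m) ! q = t ! (if q = p then p + m else q)"
  using assms(1)
proof (induction m arbitrary: t)
  case (Suc m)
  let ?t' = "gen_act X qop t (BGen (p + m) True)"
  have "p + m < length ?t'"
    using Suc.prems by simp
  then have "word_act X qop ?t' (pull_word p m) ! q = ?t' ! (if q = p then p + m else q)"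
    by (rule Suc.IH)
  then show ?case
    using Suc.prems assms(2) by (auto simp: pull_word_Suc nth_list_update)
qed (simp add: pull_word_def)

lemma gen_act_equal_neighbours:
  assumes "quandle X qop" "Suc i < length t" "t ! i = t ! Suc i" "t ! i \<in> X"
  shows "gen_act X qop t (BGen i True) = t"
proof -
  have "qop (t ! i) (t ! i) = t ! i"
    using assms(1,4) unfolding quandle_def by blast
  with assms(2,3) show ?thesis
    by (intro nth_equalityI) (auto simp: nth_list_update)
qed

lemma odd_perm_in_stab_image_of_repeated_entry:
  assumes "quandle X qop" "set s \<subseteq> X" "length s = n"
    and "i < j" "j < n" "s ! i = s ! j"
  shows "\<exists>\<pi>\<in>stab_image X qop n s. \<not> evenperm \<pi>"
proof -
  define L where "L = pull_word (Suc i) (j - Suc i)"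
  define W where "W = L @ [BGen i True] @ word_inv L"
  let ?s' = "word_act X qop s L"
  have bound: "Suc i + (j - Suc i) < length s"
    using assms(3-5) by simp
  have valid_L: "valid_word n L"
    unfolding L_def using valid_pull_word bound assms(3) by simp
  have "?s' ! i = s ! i" "?s' ! Suc i = s ! j"
    using nth_word_act_pull_word[OF bound, of i] nth_word_act_pull_word[OF bound, of "Suc i"]
      assms(4)
    unfolding L_def by simp_all
  moreover have "s ! i \<in> X"
    using assms(2-5) by auto
  ultimately have fixed: "gen_act X qop ?s' (BGen i True) = ?s'"
    using assms(3-6) by (intro gen_act_equal_neighbours[OF assms(1)]) simp_all
  have "word_act X qop s W = s"
    using word_act_word_inv[OF assms(1,2)] valid_L assms(3) fixed
    unfolding W_def by (simp add: word_act_append)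
  moreover have "valid_word n W"
    using valid_L assms(4,5) unfolding W_def valid_word_append valid_word_inv
    by (simp add: valid_word_def)
  ultimately have "word_perm W \<in> stab_image X qop n s"
    unfolding stab_image_def by blast
  moreover have "odd (length W)"
    unfolding W_def by simp
  ultimately show ?thesis
    using evenperm_word_perm by blast
qed

lemma repeated_entry_of_card_gt:
  assumes "finite C" "card {i. i < n \<and> s ! i \<in> C} > card C"
  obtains i j where "i < j" "j < n" "s ! i = s ! j"
proof -
  let ?I = "{i. i < n \<and> s ! i \<in> C}"
  have "card ((!) s ` ?I) \<le> card C"
    using assms(1) by (intro card_mono) auto
  then have "\<not> inj_on ((!) s) ?I"
    using assms(2) card_image by fastforce
  then show ?thesis
    using that unfolding inj_on_def by (metis (no_types, lifting) mem_Collect_eq nat_neq_iff)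
qed

theorem corollary4p36:
  fixes X :: "'a set" and qop :: "'a \<Rightarrow> 'a \<Rightarrow> 'a" and s :: "'a list" and n :: nat
  assumes "quandle X qop" and "finite X"
    and "length s = n" and "set s \<subseteq> X"
    and "\<exists>C \<in> components X qop. card {i. i < n \<and> s ! i \<in> C} > card C"
  shows "\<not> stab_image X qop n s \<subseteq> alternating n"
proof -
  obtain C where C: "C \<in> components X qop" and card_gt: "card {i. i < n \<and> s ! i \<in> C} > card C"
    using assms(5) by blast
  have "finite C"
    using components_subset[OF assms(1) C] assms(2) finite_subset by blast
  then obtain i j where "i < j" "j < n" "s ! i = s ! j"
    using card_gt by (rule repeated_entry_of_card_gt)
  then obtain \<pi> where "\<pi> \<in> stab_image X qop n s" "\<not> evenperm \<pi>"
    using odd_perm_in_stab_image_of_repeated_entry[OF assms(1,4,3)] by blast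
  then show ?thesis
    unfolding alternating_def by blast
qed

end
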